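(* Let $P=\{x\in\mathbb R^n : Ax=b,\ x\ge 0\}$ be a polyhedron in standard form. Then the cone $$C_A=\{(y^+,y^-)\in\mathbb R^{2n} : A(y^+-y^-)=0,\ y^+,y^-\ge 0\}$$ is pointed and is generated by a set of extreme rays $S\cup T'$, where: (1) $S:=\{(y^+,y^-) : y^+_i=\max\{g_i,0\},\ y^-_i=\max\{-g_i,0\}\ (i\le n),\ g\in\mathcal C(A)\}$ (these give the circuits of $P$); (2) $T'$ is a subset of $T:=\{(y^+,y^-) : \text{for some } i\le n,\ y^+_i=y^-_i=1,\ y^+_j=y^-_j=0\ (j\ne i)\}$ with $|T'|\le n$. That is, the extreme rays of $C_A$ are exactly the rays spanned by the elements of $S\cup T'$.
   Context: $\mathcal C(A)$ denotes the set of circuits of the standard form polyhedron: all $g\in\ker(A)\setminus\{0\}$, normalized to coprime integer components, that are support-minimal in $\ker(A)\setminus\{0\}$ (no $x\in\ker(A)\setminus\{0\}$ has $\operatorname{supp}(x)\subsetneq\operatorname{supp}(g)$). *)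

theory Defs
  imports "HOL-Analysis.Analysis"
begin

definition supp :: "real^'n \<Rightarrow> 'n set" where
  "supp x = {i. x $ i \<noteq> 0}"

definition circuits :: "real^'n^'m \<Rightarrow> (real^'n) set" where
  "circuits A = {g. A *v g = 0 \<and> g \<noteq> 0
      \<and> (\<exists>z :: 'n \<Rightarrow> int. (\<forall>i. g $ i = of_int (z i)) \<and> Gcd (range z) = 1)
      \<and> \<not> (\<exists>x. A *v x = 0 \<and> x \<noteq> 0 \<and> supp x \<subset> supp g)}"

definition CA :: "real^'n^'m \<Rightarrow> ((real^'n) \<times> (real^'n)) set" where
  "CA A = {p. A *v (fst p - snd p) = 0 \<and> (\<forall>i. fst p $ i \<ge> 0) \<and> (\<forall>i. snd p $ i \<ge> 0)}"

definition S_set :: "real^'n^'m \<Rightarrow> ((real^'n) \<times> (real^'n)) set" where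
  "S_set A = {((\<chi> i. max (g $ i) 0), (\<chi> i. max (- (g $ i)) 0)) | g. g \<in> circuits A}"

definition T_set :: "((real^'n) \<times> (real^'n)) set" where
  "T_set = {(axis i 1, axis i 1) | i. True}"

definition pointed :: "'a::real_vector set \<Rightarrow> bool" where
  "pointed C \<longleftrightarrow> C \<inter> uminus ` C = {0}"

definition ray :: "'a::real_vector \<Rightarrow> 'a set" where
  "ray v = {t *\<^sub>R v | t. t \<ge> 0}"

definition extreme_ray :: "'a::real_vector set \<Rightarrow> 'a \<Rightarrow> bool" where
  "extreme_ray C v \<longleftrightarrow> v \<noteq> 0 \<and> ray v face_of C"

end

theory Submission
  imports Defs
begin

(* A nonzero v = (v+, v-) in C_A spans an extreme ray iff it is support rigid: every w with
   A (w+ - w-) = 0 whose two supports lie inside those of v is a multiple of v. Indeed, for any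
   other such w the points v + e w and v - e w stay in C_A for small e > 0, and v lies on the
   open segment between them.

   If some coordinate i lies in both supports of a rigid v, then v is a multiple of (e_i, e_i)
   and A e_i <> 0. Otherwise v is the sign split of g = v+ - v-, and rigidity says that g is
   support-minimal in ker A. For rational A such a g is a positive multiple of a coprime integer
   vector, i.e. of a circuit: a Q-linear map phi : R -> Q with phi 1 = 1, applied coordinatewise
   to g / g_k, yields a kernel vector supported in supp g with k-th entry 1. It therefore equals
   g / g_k, which consequently has rational entries.

   Generation by the extreme rays is Krein-Milman, applied to the compact base of C_A cut out
   by "sum of all entries = 1"; its extreme points are rigid by the same perturbation argument. *)

type_synonym 'n vec_pair = "(real, 'n) vec \<times> (real, 'n) vec"

lemma mem_CA_iff:
  "p \<in> CA A \<longleftrightarrow> A *v (fst p - snd p) = 0 \<and> (\<forall>i. fst p $ i \<ge> 0) \<and> (\<forall>i. snd p $ i \<ge> 0)"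
  by (simp add: CA_def)

lemma convex_cone_CA: "convex_cone (CA A)"
  by (auto simp: convex_cone_iff mem_CA_iff matrix_vector_mult_diff_distrib
      matrix_vector_right_distrib matrix_vector_mult_scaleR)

lemma pointed_CA: "pointed (CA A)"
proof -
  have "x = 0" if "x \<in> CA A" "- x \<in> CA A" for x
    using that by (auto simp: mem_CA_iff prod_eq_iff vec_eq_iff intro: order.antisym)
  moreover have "0 \<in> CA A"
    by (simp add: mem_CA_iff)
  ultimately show ?thesis
    unfolding pointed_def by (auto intro: image_eqI[of 0 _ 0])
qed

lemma closed_CA: "closed (CA A)"
  unfolding CA_def
  by (intro closed_Collect_conj closed_Collect_all closed_Collect_le closed_Collect_eq
      continuous_on_compose2[OF matrix_vector_mult_linear_continuous_on] continuous_intros) auto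

lemma CA_nonzero_has_positive_entry:
  assumes "v \<in> CA A" "v \<noteq> 0"
  obtains i where "fst v $ i > 0 \<or> snd v $ i > 0"
proof -
  have "fst v \<noteq> 0 \<or> snd v \<noteq> 0"
    using assms(2) by (simp add: prod_eq_iff)
  then obtain i where "fst v $ i \<noteq> 0 \<or> snd v $ i \<noteq> 0"
    by (auto simp: vec_eq_iff)
  with assms(1) that show thesis
    by (force simp: mem_CA_iff order_less_le)
qed

lemma CA_scaleR_nonneg:
  assumes "v \<in> CA A" "v \<noteq> 0" "c *\<^sub>R v \<in> CA A"
  shows "c \<ge> 0"
proof -
  obtain i where "fst v $ i > 0 \<or> snd v $ i > 0"
    using CA_nonzero_has_positive_entry[OF assms(1,2)] .
  moreover have "c * fst v $ i \<ge> 0" "c * snd v $ i \<ge> 0"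
    using assms(3) by (simp_all add: mem_CA_iff)
  ultimately show ?thesis
    by (auto simp: zero_le_mult_iff)
qed

lemma supp_scaleR [simp]: "c \<noteq> 0 \<Longrightarrow> supp (c *\<^sub>R x) = supp x"
  by (simp add: supp_def)

lemma supp_subset_convex_combination:
  fixes a b :: "real^'n"
  assumes "\<forall>i. a $ i \<ge> 0" "\<forall>i. b $ i \<ge> 0" "0 < u" "u < 1"
  shows "supp a \<subseteq> supp ((1 - u) *\<^sub>R a + u *\<^sub>R b)"
  using assms by (force simp: supp_def add_nonneg_eq_0_iff)

lemma ray_self: "v \<in> ray v"
  unfolding ray_def by (auto intro: exI[of _ 1])

lemma ray_scaleR: "t > 0 \<Longrightarrow> ray (t *\<^sub>R u) = ray u"
  unfolding ray_def
proof (intro set_eqI iffI)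
  fix x assume t: "t > 0" and "x \<in> {s *\<^sub>R t *\<^sub>R u |s. 0 \<le> s}"
  then show "x \<in> {s *\<^sub>R u |s. 0 \<le> s}" by force
next
  fix x assume t: "t > 0" and "x \<in> {s *\<^sub>R u |s. 0 \<le> s}"
  then obtain s where "x = s *\<^sub>R u" "s \<ge> 0" by auto
  then have "x = (s / t) *\<^sub>R t *\<^sub>R u" "s / t \<ge> 0" using t by auto
  then show "x \<in> {s *\<^sub>R t *\<^sub>R u |s. 0 \<le> s}" by blast
qed

lemma ray_eq_image: "ray v = (\<lambda>t. t *\<^sub>R v) ` {0..}"
  by (auto simp: ray_def)

lemma convex_ray: "convex (ray v)"
  unfolding ray_eq_image by (intro convex_scaled convex_real_interval)

lemma ray_subset_CA: "v \<in> CA A \<Longrightarrow> ray v \<subseteq> CA A"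
  unfolding ray_def using convex_cone_scaleR[OF convex_cone_CA] by blast

section \<open>Extreme rays of C_A and support rigidity\<close>

lemma in_open_segment_add_diff:
  fixes v w :: "'a::real_vector"
  assumes "w \<noteq> 0" "e \<noteq> 0"
  shows "v \<in> open_segment (v + e *\<^sub>R w) (v - e *\<^sub>R w)"
proof -
  have "midpoint (v + e *\<^sub>R w) (v - e *\<^sub>R w) = v"
    by (simp add: midpoint_def scaleR_add_right flip: scaleR_add_left)
  moreover have "(v + e *\<^sub>R w) - (v - e *\<^sub>R w) = (2 * e) *\<^sub>R w"
    by (simp add: algebra_simps flip: scaleR_add_left)
  then have "v + e *\<^sub>R w \<noteq> v - e *\<^sub>R w"
    using assms by (metis mult_eq_0_iff right_minus_eq scaleR_eq_0_iff zero_neq_numeral)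
  ultimately show ?thesis
    by (metis midpoint_in_open_segment)
qed

lemma nonneg_perturbation:
  fixes v w :: "real^'n"
  assumes nonneg: "\<forall>i. v $ i \<ge> 0" and sub: "supp w \<subseteq> supp v"
  shows "\<exists>e>0. \<forall>c i. \<bar>c\<bar> \<le> e \<longrightarrow> v $ i + c * w $ i \<ge> 0"
proof -
  define e where "e = Min (insert 1 ((\<lambda>i. v $ i / \<bar>w $ i\<bar>) ` supp w))"
  have pos: "v $ i / \<bar>w $ i\<bar> > 0" if "i \<in> supp w" for i
    using that sub nonneg[rule_format, of i] by (auto simp: supp_def)
  have "e > 0"
    unfolding e_def using pos by (subst Min_gr_iff) auto
  moreover have "v $ i + c * w $ i \<ge> 0" if c: "\<bar>c\<bar> \<le> e" for c i
  proof (cases "i \<in> supp w")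
    case True
    then have "e \<le> v $ i / \<bar>w $ i\<bar>"
      unfolding e_def by (intro Min_le) auto
    with True have "e * \<bar>w $ i\<bar> \<le> v $ i"
      by (simp add: supp_def le_divide_eq)
    with c have "\<bar>c\<bar> * \<bar>w $ i\<bar> \<le> v $ i"
      by (meson abs_ge_zero mult_right_mono order_trans)
    then show ?thesis
      by (metis abs_ge_minus_self abs_mult diff_ge_0_iff_ge diff_minus_eq_add order_trans)
  qed (use nonneg in \<open>auto simp: supp_def\<close>)
  ultimately show ?thesis by blast
qed

lemma CA_perturbation:
  fixes A :: "real^'n^'m"
  assumes v: "v \<in> CA A" and w: "A *v (fst w - snd w) = 0"
    and sub: "supp (fst w) \<subseteq> supp (fst v)" "supp (snd w) \<subseteq> supp (snd v)"
  shows "\<exists>e>0. \<forall>c. \<bar>c\<bar> \<le> e \<longrightarrow> v + c *\<^sub>R w \<in> CA A"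
proof -
  obtain e1 where e1: "e1 > 0" "\<forall>c i. \<bar>c\<bar> \<le> e1 \<longrightarrow> fst v $ i + c * fst w $ i \<ge> 0"
    using nonneg_perturbation[OF _ sub(1)] v by (auto simp: mem_CA_iff)
  obtain e2 where e2: "e2 > 0" "\<forall>c i. \<bar>c\<bar> \<le> e2 \<longrightarrow> snd v $ i + c * snd w $ i \<ge> 0"
    using nonneg_perturbation[OF _ sub(2)] v by (auto simp: mem_CA_iff)
  have "fst (v + c *\<^sub>R w) - snd (v + c *\<^sub>R w) = (fst v - snd v) + c *\<^sub>R (fst w - snd w)" for c
    by (simp add: algebra_simps)
  then have "A *v (fst (v + c *\<^sub>R w) - snd (v + c *\<^sub>R w))
      = A *v (fst v - snd v) + c *\<^sub>R (A *v (fst w - snd w))" for c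
    by (simp only: matrix_vector_right_distrib matrix_vector_mult_scaleR)
  then have "v + c *\<^sub>R w \<in> CA A" if "\<bar>c\<bar> \<le> min e1 e2" for c
    using that e1 e2 v w by (simp add: mem_CA_iff)
  moreover have "min e1 e2 > 0" using e1 e2 by simp
  ultimately show ?thesis by blast
qed

lemma CA_perturbation_open_segment:
  fixes A :: "real^'n^'m"
  assumes v: "v \<in> CA A" and w: "A *v (fst w - snd w) = 0" "w \<noteq> 0"
    and sub: "supp (fst w) \<subseteq> supp (fst v)" "supp (snd w) \<subseteq> supp (snd v)"
  obtains e where "e > 0" "v + e *\<^sub>R w \<in> CA A" "v - e *\<^sub>R w \<in> CA A"
    "v \<in> open_segment (v + e *\<^sub>R w) (v - e *\<^sub>R w)"
proof -
  obtain e where e: "e > 0" "\<forall>c. \<bar>c\<bar> \<le> e \<longrightarrow> v + c *\<^sub>R w \<in> CA A"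
    using CA_perturbation[OF v w(1) sub] by blast
  have "v - e *\<^sub>R w \<in> CA A"
    using e(2)[rule_format, of "- e"] e(1) by simp
  then show thesis
    using that e in_open_segment_add_diff[OF w(2), of e v] by simp
qed

definition support_rigid :: "real^'n^'m \<Rightarrow> 'n vec_pair \<Rightarrow> bool" where
  "support_rigid A v \<longleftrightarrow>
     (\<forall>w. A *v (fst w - snd w) = 0 \<and> supp (fst w) \<subseteq> supp (fst v) \<and> supp (snd w) \<subseteq> supp (snd v)
        \<longrightarrow> (\<exists>c. w = c *\<^sub>R v))"

lemma support_rigid_if_ray_face:
  assumes v: "v \<in> CA A" and face: "ray v face_of CA A"
  shows "support_rigid A v"
  unfolding support_rigid_def
proof (intro allI impI)
  fix w assume w: "A *v (fst w - snd w) = 0 \<and> supp (fst w) \<subseteq> supp (fst v) \<and> supp (snd w) \<subseteq> supp (snd v)"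
  show "\<exists>c. w = c *\<^sub>R v"
  proof (cases "w = 0")
    case False
    then obtain e where e: "e > 0" "v + e *\<^sub>R w \<in> CA A" "v - e *\<^sub>R w \<in> CA A"
      "v \<in> open_segment (v + e *\<^sub>R w) (v - e *\<^sub>R w)"
      using CA_perturbation_open_segment[OF v] w by metis
    then have "v + e *\<^sub>R w \<in> ray v"
      using face_ofD[OF face e(4) e(2,3) ray_self] by blast
    then obtain t where "v + e *\<^sub>R w = t *\<^sub>R v"
      unfolding ray_def by blast
    then have "e *\<^sub>R w = (t - 1) *\<^sub>R v"
      by (simp add: algebra_simps)
    then have "w = ((t - 1) / e) *\<^sub>R v"
      using e(1) by (simp add: eq_vector_fraction_iff)
    then show ?thesis ..
  qed (auto intro: exI[of _ 0])
qed

lemma ray_face_if_support_rigid: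
  fixes A :: "real^'n^'m"
  assumes v: "v \<in> CA A" "v \<noteq> 0" and rigid: "support_rigid A v"
  shows "ray v face_of CA A"
proof -
  have end_in_ray: "a \<in> ray v"
    if a: "a \<in> CA A" and b: "b \<in> CA A" and x: "x \<in> ray v" "x \<in> open_segment a b" for a b x
  proof -
    obtain t where t: "x = t *\<^sub>R v" using x(1) by (auto simp: ray_def)
    obtain u where u: "0 < u" "u < 1" "x = (1 - u) *\<^sub>R a + u *\<^sub>R b"
      using x(2) by (auto simp: in_segment)
    have "supp (fst a) \<subseteq> supp (fst x)" "supp (snd a) \<subseteq> supp (snd x)"
      using supp_subset_convex_combination[OF _ _ u(1,2)] a b u(3)
      by (auto simp: mem_CA_iff)
    moreover have "supp (fst x) \<subseteq> supp (fst v)" "supp (snd x) \<subseteq> supp (snd v)"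
      by (auto simp: t supp_def)
    ultimately obtain c where "a = c *\<^sub>R v"
      using rigid a unfolding support_rigid_def mem_CA_iff by blast
    with CA_scaleR_nonneg[OF v] a show ?thesis
      by (auto simp: ray_def)
  qed
  show ?thesis
    unfolding face_of_def
    using ray_subset_CA[OF v(1)] convex_ray end_in_ray open_segment_commute by blast
qed

lemma extreme_ray_CA_iff:
  "extreme_ray (CA A) v \<longleftrightarrow> v \<in> CA A \<and> v \<noteq> 0 \<and> support_rigid A v"
  using ray_face_if_support_rigid support_rigid_if_ray_face face_of_imp_subset ray_self
  unfolding extreme_ray_def by blast

section \<open>Support-minimal kernel vectors of rational matrices\<close>

definition support_minimal :: "real^'n^'m \<Rightarrow> real^'n \<Rightarrow> bool" where
  "support_minimal A g \<longleftrightarrow>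
     A *v g = 0 \<and> g \<noteq> 0 \<and> \<not> (\<exists>x. A *v x = 0 \<and> x \<noteq> 0 \<and> supp x \<subset> supp g)"

lemma support_minimal_iff:
  fixes A :: "real^'n^'m"
  shows "support_minimal A g \<longleftrightarrow>
    A *v g = 0 \<and> g \<noteq> 0 \<and> (\<forall>x. A *v x = 0 \<and> supp x \<subseteq> supp g \<longrightarrow> (\<exists>c. x = c *\<^sub>R g))"
proof (intro iffI conjI allI impI; (elim conjE)?)
  assume min: "support_minimal A g"
  then show "A *v g = 0" "g \<noteq> 0" by (simp_all add: support_minimal_def)
  fix x assume x: "A *v x = 0" "supp x \<subseteq> supp g"
  obtain k where k: "g $ k \<noteq> 0" using \<open>g \<noteq> 0\<close> by (auto simp: vec_eq_iff)
  define y where "y = x - (x $ k / g $ k) *\<^sub>R g"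
  have "A *v y = 0"
    using x \<open>A *v g = 0\<close> by (simp add: y_def matrix_vector_mult_diff_distrib matrix_vector_mult_scaleR)
  moreover have "supp y \<subseteq> supp g" "k \<notin> supp y" "k \<in> supp g"
    using x k by (auto simp: y_def supp_def)
  then have "supp y \<subset> supp g"
    by blast
  ultimately have "y = 0"
    using min unfolding support_minimal_def by blast
  then show "\<exists>c. x = c *\<^sub>R g"
    by (auto simp: y_def)
next
  assume "A *v g = 0" "g \<noteq> 0" and line: "\<forall>x. A *v x = 0 \<and> supp x \<subseteq> supp g \<longrightarrow> (\<exists>c. x = c *\<^sub>R g)"
  moreover have "supp x = supp g" if "A *v x = 0" "x \<noteq> 0" "supp x \<subseteq> supp g" for x
    using line that by (metis scale_eq_0_iff supp_scaleR)
  ultimately show "support_minimal A g"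
    unfolding support_minimal_def by blast
qed

lemma support_minimal_scaleR:
  "c \<noteq> 0 \<Longrightarrow> support_minimal A (c *\<^sub>R g) \<longleftrightarrow> support_minimal A g"
  by (simp add: support_minimal_def matrix_vector_mult_scaleR)

lemma mem_circuits_iff:
  fixes A :: "real^'n::finite^'m"
  shows "g \<in> circuits A \<longleftrightarrow>
     support_minimal A g \<and> (\<exists>z :: 'n \<Rightarrow> int. (\<forall>i. g $ i = of_int (z i)) \<and> Gcd (range z) = 1)"
  by (auto simp: circuits_def support_minimal_def)

lemma rat_linear_functional_exists:
  obtains \<phi> :: "real \<Rightarrow> real"
  where "\<And>x. \<phi> x \<in> \<rat>" "\<phi> 1 = 1" "\<And>x y. \<phi> (x + y) = \<phi> x + \<phi> y"
    "\<And>q x. q \<in> \<rat> \<Longrightarrow> \<phi> (q * x) = q * \<phi> x"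
proof -
  interpret V: vector_space "\<lambda>(q::rat) (x::real). of_rat q * x"
    by unfold_locales (auto simp: algebra_simps of_rat_add of_rat_mult)
  define B where "B = V.extend_basis {1}"
  have ind1: "V.independent {1::real}"
    by (simp add: V.independent_insert)
  have indep: "V.independent B" and span: "V.span B = UNIV" and one: "1 \<in> B"
    using V.independent_extend_basis[OF ind1] V.span_extend_basis[OF ind1]
      V.extend_basis_superset[OF ind1] by (auto simp: B_def)
  define \<phi> :: "real \<Rightarrow> real" where "\<phi> x = of_rat (V.representation B x 1)" for x
  show thesis
  proof
    show "\<phi> x \<in> \<rat>" for x
      by (simp add: \<phi>_def)
    show "\<phi> 1 = 1"
      by (simp add: \<phi>_def V.representation_basis[OF indep one])
    show "\<phi> (x + y) = \<phi> x + \<phi> y" for x y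
      by (simp add: \<phi>_def V.representation_add[OF indep] span of_rat_add)
    show "\<phi> (q * x) = q * \<phi> x" if "q \<in> \<rat>" for q x
      using that V.representation_scale[OF indep, of x] span
      by (auto simp: \<phi>_def of_rat_mult elim!: Rats_cases)
  qed
qed

lemma rat_linear_functional_sum:
  fixes \<phi> :: "real \<Rightarrow> real"
  assumes add: "\<And>x y. \<phi> (x + y) = \<phi> x + \<phi> y"
    and scale: "\<And>q x. q \<in> \<rat> \<Longrightarrow> \<phi> (q * x) = q * \<phi> x"
    and rat: "\<And>j. j \<in> S \<Longrightarrow> c j \<in> \<rat>"
  shows "\<phi> (\<Sum>j\<in>S. c j * x j) = (\<Sum>j\<in>S. c j * \<phi> (x j))"
proof -
  have zero: "\<phi> 0 = 0"
    using scale[of 0 0] by simp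
  from rat show ?thesis
    by (induction S rule: infinite_finite_induct) (simp_all add: zero add scale)
qed

lemma rat_matrix_kernel_map:
  fixes A :: "real^'n^'m" and \<phi> :: "real \<Rightarrow> real"
  assumes rat: "\<forall>i j. A $ i $ j \<in> \<rat>"
    and add: "\<And>x y. \<phi> (x + y) = \<phi> x + \<phi> y"
    and scale: "\<And>q x. q \<in> \<rat> \<Longrightarrow> \<phi> (q * x) = q * \<phi> x"
    and x: "A *v x = 0"
  shows "A *v (\<chi> i. \<phi> (x $ i)) = 0"
proof -
  have "(A *v (\<chi> i. \<phi> (x $ i))) $ k = \<phi> ((A *v x) $ k)" for k
    using rat_linear_functional_sum[OF add scale, of UNIV "\<lambda>j. A $ k $ j" "\<lambda>j. x $ j"] rat
    by (simp add: matrix_vector_mult_def)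
  moreover have "\<phi> 0 = 0"
    using scale[of 0 0] by simp
  ultimately show ?thesis
    using x by (simp add: vec_eq_iff)
qed

lemma support_minimal_rational_multiple:
  fixes A :: "real^'n^'m"
  assumes rat: "\<forall>i j. A $ i $ j \<in> \<rat>" and g: "support_minimal A g"
  obtains t q where "t > 0" "g = t *\<^sub>R q" "\<forall>i. q $ i \<in> \<rat>"
proof -
  obtain \<phi> :: "real \<Rightarrow> real" where \<phi>: "\<And>x. \<phi> x \<in> \<rat>" "\<phi> 1 = 1"
    "\<And>x y. \<phi> (x + y) = \<phi> x + \<phi> y" "\<And>q x. q \<in> \<rat> \<Longrightarrow> \<phi> (q * x) = q * \<phi> x"
    using rat_linear_functional_exists by blast
  have "g \<noteq> 0" "A *v g = 0"
    using g by (simp_all add: support_minimal_def)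
  then obtain k where k: "g $ k \<noteq> 0"
    by (auto simp: vec_eq_iff)
  define u where "u = (1 / g $ k) *\<^sub>R g"
  have u_min: "support_minimal A u"
    using g k by (simp add: u_def support_minimal_scaleR)
  define h where "h = (\<chi> i. \<phi> (u $ i))"
  have "A *v h = 0"
    unfolding h_def using u_min rat \<phi>(3,4) rat_matrix_kernel_map[of A \<phi> u]
    by (simp add: support_minimal_def)
  moreover have "supp h \<subseteq> supp u"
    using \<phi>(4)[of 0 0] by (auto simp: h_def supp_def)
  ultimately obtain c where c: "h = c *\<^sub>R u"
    using u_min by (auto simp: support_minimal_iff)
  have "u $ k = 1"
    using k by (simp add: u_def)
  moreover have "h $ k = 1"
    using \<phi>(2) k by (simp add: h_def u_def)
  ultimately have "h = u"
    using c arg_cong[OF c, of "\<lambda>x. x $ k"] by simp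
  then have u_rat: "\<forall>i. u $ i \<in> \<rat>"
    using \<phi>(1) by (metis h_def vec_lambda_beta)
  have g_u: "g = g $ k *\<^sub>R u"
    using k by (simp add: u_def)
  show thesis
  proof (cases "g $ k > 0")
    case True
    with g_u u_rat show thesis by (intro that[of "g $ k" u])
  next
    case False
    with k g_u u_rat show thesis by (intro that[of "- g $ k" "- u"]) auto
  qed
qed

lemma rational_vector_common_denominator:
  fixes q :: "real^'n"
  assumes "\<forall>i. q $ i \<in> \<rat>"
  obtains D :: int and z :: "'n \<Rightarrow> int" where "D > 0" "\<forall>i. of_int D * q $ i = of_int (z i)"
proof -
  have "\<forall>i. \<exists>a b :: int. b > 0 \<and> q $ i = of_int a / of_int b"
    using assms by (metis Rats_cases')
  then obtain a b :: "'n \<Rightarrow> int" where ab: "\<And>i. b i > 0" "\<And>i. q $ i = of_int (a i) / of_int (b i)"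
    by metis
  define D where "D = prod b UNIV"
  have "D > 0"
    using ab(1) by (simp add: D_def prod_pos)
  moreover have "of_int D * q $ i = of_int (a i * (D div b i))" for i
  proof -
    have "b i dvd D"
      by (simp add: D_def dvd_prodI)
    then show ?thesis
      using ab[of i] by auto
  qed
  ultimately show thesis
    using that[of D "\<lambda>i. a i * (D div b i)"] by blast
qed

lemma integer_vector_primitive_multiple:
  fixes z0 :: "'n::finite \<Rightarrow> int"
  assumes "z0 k \<noteq> 0"
  obtains d z where "d > 0" "\<forall>i. z0 i = d * z i" "Gcd (range z) = 1"
proof -
  define d where "d = Gcd (range z0)"
  have "d \<noteq> 0"
    using assms by (auto simp: d_def)
  then have "d > 0"
    using Gcd_int_greater_eq_0[of "range z0"] unfolding d_def by linarith
  define z where "z i = z0 i div d" for i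
  have z0_z: "z0 i = d * z i" for i
    by (simp add: z_def d_def Gcd_dvd)
  then have "range z0 = (*) d ` range z"
    by auto
  then have "Gcd (range z0) = normalize (d * Gcd (range z))"
    by (simp only: Gcd_mult)
  then have "d = normalize (d * Gcd (range z))"
    by (simp only: d_def)
  also have "\<dots> = d * Gcd (range z)"
    using \<open>d > 0\<close> Gcd_int_greater_eq_0[of "range z"] by (simp add: abs_mult)
  finally have "Gcd (range z) = 1"
    using \<open>d > 0\<close> by simp
  with \<open>d > 0\<close> z0_z show thesis
    using that by blast
qed

lemma support_minimal_circuit_multiple:
  fixes A :: "real^'n^'m"
  assumes rat: "\<forall>i j. A $ i $ j \<in> \<rat>" and g: "support_minimal A g"
  obtains t h where "t > 0" "h \<in> circuits A" "g = t *\<^sub>R h"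
proof -
  obtain t q where tq: "t > 0" "g = t *\<^sub>R q" "\<forall>i. q $ i \<in> \<rat>"
    using support_minimal_rational_multiple[OF rat g] .
  obtain D z0 where D: "D > 0" "\<forall>i. of_int D * q $ i = of_int (z0 i)"
    using rational_vector_common_denominator[OF tq(3)] .
  have "q \<noteq> 0"
    using g tq(2) by (auto simp: support_minimal_def)
  then obtain k where "q $ k \<noteq> 0"
    by (auto simp: vec_eq_iff)
  then have "of_int D * q $ k \<noteq> 0"
    using D(1) by simp
  then have "z0 k \<noteq> 0"
    using D(2) by (metis of_int_0)
  then obtain d z where dz: "d > 0" "\<forall>i. z0 i = d * z i" "Gcd (range z) = 1"
    using integer_vector_primitive_multiple by metis
  define h :: "real^'n" where "h = (\<chi> i. of_int (z i))"
  have g_h: "g = (t * of_int d / of_int D) *\<^sub>R h"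
    using tq(2) D dz(2) by (auto simp: h_def vec_eq_iff field_simps)
  have "t * of_int d / of_int D > 0"
    using tq(1) dz(1) D(1) by simp
  moreover have "h \<in> circuits A"
    unfolding mem_circuits_iff
    using g g_h tq(1) dz(1,3) D(1) support_minimal_scaleR[of "t * of_int d / of_int D" A h]
    by (auto simp: h_def)
  ultimately show thesis
    using that g_h by blast
qed

section \<open>The support-rigid elements of C_A\<close>

definition sign_split :: "real^'n \<Rightarrow> 'n vec_pair" where
  "sign_split g = ((\<chi> i. max (g $ i) 0), (\<chi> i. max (- (g $ i)) 0))"

lemma S_set_eq_image: "S_set A = sign_split ` circuits A"
  by (auto simp: S_set_def sign_split_def)

lemma sign_split_diff [simp]: "fst (sign_split g) - snd (sign_split g) = g"
  by (simp add: sign_split_def vec_eq_iff max_def)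

lemma sign_split_scaleR: "t > 0 \<Longrightarrow> sign_split (t *\<^sub>R g) = t *\<^sub>R sign_split g"
  by (simp add: sign_split_def vec_eq_iff prod_eq_iff max_def mult_le_0_iff zero_le_mult_iff)

lemma sign_split_mem_CA: "A *v g = 0 \<Longrightarrow> sign_split g \<in> CA A"
  by (simp add: mem_CA_iff) (simp add: sign_split_def)

lemma sign_split_eq_0_iff [simp]: "sign_split g = 0 \<longleftrightarrow> g = 0"
  using sign_split_diff[of g] by (auto simp: sign_split_def prod_eq_iff vec_eq_iff)

lemma supp_sign_split:
  "supp (fst (sign_split g)) = {i. g $ i > 0}" "supp (snd (sign_split g)) = {i. g $ i < 0}"
  by (auto simp: supp_def sign_split_def max_def)

lemma support_rigid_sign_split:
  fixes A :: "real^'n^'m"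
  assumes g: "support_minimal A g"
  shows "support_rigid A (sign_split g)"
  unfolding support_rigid_def
proof (intro allI impI; elim conjE)
  fix w :: "'n vec_pair"
  assume kernel: "A *v (fst w - snd w) = 0"
    and sub: "supp (fst w) \<subseteq> supp (fst (sign_split g))" "supp (snd w) \<subseteq> supp (snd (sign_split g))"
  have "supp (fst w - snd w) \<subseteq> supp (fst w) \<union> supp (snd w)"
    by (auto simp: supp_def)
  also have "\<dots> \<subseteq> supp g"
    using sub unfolding supp_sign_split by (auto simp: supp_def)
  finally obtain c where c: "fst w - snd w = c *\<^sub>R g"
    using g kernel by (auto simp: support_minimal_iff)
  have zero: "g $ i \<le> 0 \<Longrightarrow> fst w $ i = 0" "g $ i \<ge> 0 \<Longrightarrow> snd w $ i = 0" for i
    using sub unfolding supp_sign_split unfolding supp_def by auto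
  have "fst w $ i = c * fst (sign_split g) $ i \<and> snd w $ i = c * snd (sign_split g) $ i" for i
  proof -
    have "fst w $ i - snd w $ i = c * g $ i"
      using arg_cong[OF c, of "\<lambda>x. x $ i"] by simp
    with zero[of i] show ?thesis
      by (cases "g $ i" "0::real" rule: linorder_cases) (auto simp: sign_split_def)
  qed
  then show "\<exists>c. w = c *\<^sub>R sign_split g"
    by (auto simp: prod_eq_iff vec_eq_iff)
qed

(* (e_i, e_i) spans an extreme ray only if A e_i <> 0: otherwise it is the sum of the sign
   splits (e_i, 0) and (0, e_i) of the circuits e_i and -e_i. *)
definition T_nonzero_cols :: "real^'n^'m \<Rightarrow> 'n vec_pair set" where
  "T_nonzero_cols A = {(axis i 1, axis i 1) | i. A *v axis i 1 \<noteq> 0}"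

lemma card_T_nonzero_cols_le: "card (T_nonzero_cols (A :: real^'n^'m)) \<le> CARD('n)"
proof -
  have "T_nonzero_cols A \<subseteq> range (\<lambda>i. (axis i 1, axis i 1))"
    by (auto simp: T_nonzero_cols_def)
  then have "card (T_nonzero_cols A) \<le> card (range (\<lambda>i::'n. (axis i (1::real), axis i (1::real))))"
    by (intro card_mono) auto
  also have "\<dots> \<le> CARD('n)"
    by (rule card_image_le) simp
  finally show ?thesis .
qed

lemma support_rigid_axis_pair:
  fixes A :: "real^'n^'m"
  assumes col: "A *v axis i 1 \<noteq> 0"
  shows "support_rigid A (axis i 1, axis i 1)"
  unfolding support_rigid_def
proof (intro allI impI; elim conjE)
  fix w :: "'n vec_pair"
  assume kernel: "A *v (fst w - snd w) = 0"
    and sub: "supp (fst w) \<subseteq> supp (fst (axis i 1, axis i 1))" "supp (snd w) \<subseteq> supp (snd (axis i 1, axis i (1::real)))"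
  have off: "fst w $ j = 0" "snd w $ j = 0" if "j \<noteq> i" for j
    using sub that by (auto simp: supp_def axis_def)
  then have "fst w - snd w = (fst w $ i - snd w $ i) *\<^sub>R axis i 1"
    by (auto simp: vec_eq_iff axis_def)
  then have "fst w $ i = snd w $ i"
    using kernel col by (simp add: matrix_vector_mult_scaleR)
  with off have "w = fst w $ i *\<^sub>R (axis i 1, axis i 1)"
    by (auto simp: prod_eq_iff vec_eq_iff axis_def)
  then show "\<exists>c. w = c *\<^sub>R (axis i 1, axis i 1)" ..
qed

lemma support_rigid_overlap:
  fixes A :: "real^'n^'m"
  assumes rigid: "support_rigid A v" and i: "fst v $ i > 0" "snd v $ i > 0"
  shows "\<exists>t>0. v = t *\<^sub>R (axis i 1, axis i 1)" "A *v axis i 1 \<noteq> 0"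
proof -
  have "supp (axis i (1::real)) \<subseteq> supp (fst v)" "supp (axis i (1::real)) \<subseteq> supp (snd v)"
    using i by (auto simp: supp_def axis_def)
  then obtain c where c: "(axis i 1, axis i 1) = c *\<^sub>R v"
    using rigid unfolding support_rigid_def by fastforce
  have "c * fst v $ i = 1"
    using arg_cong[OF c, of "\<lambda>p. fst p $ i"] by simp
  then have "c > 0"
    using i by (smt (verit) mult_nonpos_nonneg)
  with c show "\<exists>t>0. v = t *\<^sub>R (axis i 1, axis i 1)"
    by (intro exI[of _ "1 / c"]) auto
  show "A *v axis i 1 \<noteq> 0"
  proof
    assume "A *v axis i 1 = 0"
    moreover have "supp (axis i (1::real)) \<subseteq> supp (fst v)" "supp (0::real^'n) \<subseteq> supp (snd v)"
      using i by (auto simp: supp_def axis_def)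
    ultimately obtain d where d: "(axis i 1, 0) = d *\<^sub>R v"
      using rigid unfolding support_rigid_def by fastforce
    have "d * fst v $ i = 1" "d * snd v $ i = 0"
      using arg_cong[OF d, of "\<lambda>p. fst p $ i"] arg_cong[OF d, of "\<lambda>p. snd p $ i"] by simp_all
    then show False
      using i by simp
  qed
qed

lemma support_rigid_disjoint:
  fixes A :: "real^'n^'m"
  assumes v: "v \<in> CA A" "v \<noteq> 0" and rigid: "support_rigid A v"
    and disj: "\<forall>i. fst v $ i = 0 \<or> snd v $ i = 0"
  shows "sign_split (fst v - snd v) = v" "support_minimal A (fst v - snd v)"
proof -
  have nonneg: "fst v $ i \<ge> 0" "snd v $ i \<ge> 0" for i
    using v(1) by (simp_all add: mem_CA_iff)
  have "max (fst v $ i - snd v $ i) 0 = fst v $ i" "max (- (fst v $ i - snd v $ i)) 0 = snd v $ i" for i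
    using disj[rule_format, of i] nonneg[of i] by auto
  then show split: "sign_split (fst v - snd v) = v"
    by (simp add: sign_split_def prod_eq_iff vec_eq_iff)
  have "fst v - snd v \<noteq> 0"
    using v(2) split by force
  moreover have "\<exists>c. x = c *\<^sub>R (fst v - snd v)"
    if x: "A *v x = 0" "supp x \<subseteq> supp (fst v - snd v)" for x
  proof -
    define w where "w = ((\<chi> i. if fst v $ i \<noteq> 0 then x $ i else 0),
                        (\<chi> i. if snd v $ i \<noteq> 0 then - x $ i else 0))"
    have "fst w - snd w = x"
      using x(2) disj by (auto simp: w_def vec_eq_iff supp_def)
    moreover have "supp (fst w) \<subseteq> supp (fst v)" "supp (snd w) \<subseteq> supp (snd v)"
      by (auto simp: w_def supp_def)
    ultimately obtain c where "w = c *\<^sub>R v"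
      using rigid x(1) unfolding support_rigid_def by metis
    then have "fst w - snd w = c *\<^sub>R (fst v - snd v)"
      by (simp add: scaleR_diff_right)
    then show ?thesis
      using \<open>fst w - snd w = x\<close> by auto
  qed
  ultimately show "support_minimal A (fst v - snd v)"
    using v(1) by (simp add: support_minimal_iff mem_CA_iff)
qed

lemma support_rigid_classification:
  fixes A :: "real^'n^'m"
  assumes rat: "\<forall>i j. A $ i $ j \<in> \<rat>"
    and v: "v \<in> CA A" "v \<noteq> 0" and rigid: "support_rigid A v"
  obtains t u where "t > 0" "u \<in> S_set A \<union> T_nonzero_cols A" "v = t *\<^sub>R u"
proof (cases "\<exists>i. fst v $ i > 0 \<and> snd v $ i > 0")
  case True
  then obtain i where i: "fst v $ i > 0" "snd v $ i > 0"
    by blast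
  then have "(axis i 1, axis i 1) \<in> T_nonzero_cols A"
    using support_rigid_overlap(2)[OF rigid] by (auto simp: T_nonzero_cols_def)
  with support_rigid_overlap(1)[OF rigid i] show thesis
    using that by blast
next
  case False
  then have "\<forall>i. fst v $ i = 0 \<or> snd v $ i = 0"
    using v(1) by (force simp: mem_CA_iff order_less_le)
  note disjoint = support_rigid_disjoint[OF v rigid this]
  obtain t h where th: "t > 0" "h \<in> circuits A" "fst v - snd v = t *\<^sub>R h"
    using support_minimal_circuit_multiple[OF rat disjoint(2)] .
  then have "v = t *\<^sub>R sign_split h"
    using disjoint(1) by (simp add: sign_split_scaleR)
  with th(1,2) show thesis
    using that[of t "sign_split h"] by (simp add: S_set_eq_image)
qed

lemma extreme_ray_generator:
  fixes A :: "real^'n^'m"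
  assumes "u \<in> S_set A \<union> T_nonzero_cols A"
  shows "extreme_ray (CA A) u"
  using assms
proof
  assume "u \<in> S_set A"
  then obtain g where "g \<in> circuits A" "u = sign_split g"
    by (auto simp: S_set_eq_image)
  then show ?thesis
    by (auto simp: extreme_ray_CA_iff mem_circuits_iff support_minimal_def
        intro: sign_split_mem_CA support_rigid_sign_split)
next
  assume "u \<in> T_nonzero_cols A"
  then obtain i where i: "A *v axis i 1 \<noteq> 0" and u: "u = (axis i 1, axis i 1)"
    by (auto simp: T_nonzero_cols_def)
  have "u \<in> CA A"
    by (simp add: u mem_CA_iff axis_def)
  moreover have "u \<noteq> 0"
    by (simp add: u zero_prod_def)
  ultimately show ?thesis
    using support_rigid_axis_pair[OF i]
    by (simp add: u extreme_ray_CA_iff)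
qed

lemma extreme_rays_CA:
  fixes A :: "real^'n^'m"
  assumes rat: "\<forall>i j. A $ i $ j \<in> \<rat>"
  shows "{ray v | v. extreme_ray (CA A) v} = {ray v | v. v \<in> S_set A \<union> T_nonzero_cols A}"
proof (intro set_eqI iffI)
  fix r assume "r \<in> {ray v | v. extreme_ray (CA A) v}"
  then obtain v where r: "r = ray v" and v: "v \<in> CA A" "v \<noteq> 0" "support_rigid A v"
    by (auto simp: extreme_ray_CA_iff)
  obtain t u where "t > 0" "u \<in> S_set A \<union> T_nonzero_cols A" "v = t *\<^sub>R u"
    using support_rigid_classification[OF rat v] .
  then show "r \<in> {ray v | v. v \<in> S_set A \<union> T_nonzero_cols A}"
    using r ray_scaleR by blast
next
  fix r assume "r \<in> {ray v | v. v \<in> S_set A \<union> T_nonzero_cols A}"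
  then show "r \<in> {ray v | v. extreme_ray (CA A) v}"
    using extreme_ray_generator by blast
qed

section \<open>Generation by the extreme rays\<close>

lemma convex_cone_subset_hull_extreme_points_of_base:
  fixes C :: "'a::euclidean_space set" and f :: "'a \<Rightarrow> real"
  assumes C: "convex_cone C" and f: "linear f" and compact: "compact {p \<in> C. f p = 1}"
    and pos: "\<And>p. p \<in> C \<Longrightarrow> p \<noteq> 0 \<Longrightarrow> f p > 0"
  shows "C \<subseteq> convex_cone hull {e. e extreme_point_of {p \<in> C. f p = 1}}"
proof
  let ?K = "{p \<in> C. f p = 1}"
  fix c assume c: "c \<in> C"
  show "c \<in> convex_cone hull {e. e extreme_point_of ?K}"
  proof (cases "c = 0")
    case True
    then show ?thesis by (simp add: convex_cone_hull_contains_0)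
  next
    case False
    then have "f c > 0"
      using pos c by blast
    have "?K = C \<inter> f -` {1}"
      by auto
    then have "convex ?K"
      using C f by (simp add: convex_Int convex_cone_def convex_linear_vimage)
    then have "?K = convex hull {e. e extreme_point_of ?K}"
      using compact Krein_Milman_Minkowski by blast
    also have "\<dots> \<subseteq> convex_cone hull {e. e extreme_point_of ?K}"
      by (rule convex_hull_subset_convex_cone_hull)
    finally have "(1 / f c) *\<^sub>R c \<in> convex_cone hull {e. e extreme_point_of ?K}"
      using \<open>f c > 0\<close> c convex_cone_scaleR[OF C] linear_cmul[OF f] by auto
    then have "f c *\<^sub>R ((1 / f c) *\<^sub>R c) \<in> convex_cone hull {e. e extreme_point_of ?K}"
      using \<open>f c > 0\<close> by (metis convex_cone_scaleR convex_cone_convex_cone_hull less_imp_le)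
    with \<open>f c > 0\<close> show ?thesis
      by simp
  qed
qed

definition entry_sum :: "'n::finite vec_pair \<Rightarrow> real" where
  "entry_sum p = (\<Sum>i\<in>UNIV. fst p $ i + snd p $ i)"

lemma linear_entry_sum: "linear entry_sum"
  by (rule linearI) (simp_all add: entry_sum_def sum.distrib sum_distrib_left algebra_simps)

lemma norm_le_entry_sum:
  assumes "p \<in> CA A"
  shows "norm p \<le> entry_sum p"
proof -
  have "norm p \<le> norm (fst p) + norm (snd p)"
    by (metis norm_Pair_le prod.collapse)
  also have "\<dots> \<le> (\<Sum>i\<in>UNIV. \<bar>fst p $ i\<bar>) + (\<Sum>i\<in>UNIV. \<bar>snd p $ i\<bar>)"
    by (intro add_mono norm_le_l1_cart)
  also have "\<dots> = entry_sum p"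
    using assms by (simp add: entry_sum_def sum.distrib mem_CA_iff)
  finally show ?thesis .
qed

lemma entry_sum_pos:
  assumes "p \<in> CA A" "p \<noteq> 0"
  shows "entry_sum p > 0"
proof -
  have "norm p > 0"
    using assms(2) by simp
  then show ?thesis
    using norm_le_entry_sum[OF assms(1)] by linarith
qed

lemma compact_CA_base: "compact {p \<in> CA (A :: real^'n^'m). entry_sum p = 1}"
proof -
  have "closed {p :: 'n vec_pair. entry_sum p = 1}"
    unfolding entry_sum_def by (intro closed_Collect_eq continuous_intros)
  then have "closed (CA A \<inter> {p. entry_sum p = 1})"
    by (intro closed_Int closed_CA)
  moreover have "CA A \<inter> {p. entry_sum p = 1} = {p \<in> CA A. entry_sum p = 1}"
    by blast
  moreover have "bounded {p \<in> CA A. entry_sum p = 1}"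
    using norm_le_entry_sum unfolding bounded_iff by fastforce
  ultimately show ?thesis
    by (simp add: compact_eq_bounded_closed)
qed

lemma support_rigid_if_extreme_point_of_base:
  fixes A :: "real^'n^'m"
  assumes e: "e extreme_point_of {p \<in> CA A. entry_sum p = 1}"
  shows "support_rigid A e"
  unfolding support_rigid_def
proof (intro allI impI; elim conjE)
  fix w :: "'n vec_pair"
  assume kernel: "A *v (fst w - snd w) = 0"
    and sub: "supp (fst w) \<subseteq> supp (fst e)" "supp (snd w) \<subseteq> supp (snd e)"
  have eK: "e \<in> CA A" "entry_sum e = 1"
    using e by (auto simp: extreme_point_of_def)
  define w' where "w' = w - entry_sum w *\<^sub>R e"
  have "fst w' - snd w' = (fst w - snd w) - entry_sum w *\<^sub>R (fst e - snd e)"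
    by (simp add: w'_def algebra_simps)
  then have kernel': "A *v (fst w' - snd w') = 0"
    using kernel eK(1) by (simp add: mem_CA_iff matrix_vector_mult_diff_distrib matrix_vector_mult_scaleR)
  have sub': "supp (fst w') \<subseteq> supp (fst e)" "supp (snd w') \<subseteq> supp (snd e)"
    using sub by (auto simp: w'_def supp_def)
  have "entry_sum w' = 0"
    using eK(2) by (simp add: w'_def linear_diff[OF linear_entry_sum] linear_cmul[OF linear_entry_sum])
  have "w' = 0"
  proof (rule ccontr)
    assume "w' \<noteq> 0"
    then obtain t where t: "e + t *\<^sub>R w' \<in> CA A" "e - t *\<^sub>R w' \<in> CA A"
      "e \<in> open_segment (e + t *\<^sub>R w') (e - t *\<^sub>R w')"
      using CA_perturbation_open_segment[OF eK(1) kernel' _ sub'] by metis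
    moreover have "entry_sum (e + t *\<^sub>R w') = 1" "entry_sum (e - t *\<^sub>R w') = 1"
      using eK(2) \<open>entry_sum w' = 0\<close>
      by (simp_all add: linear_add[OF linear_entry_sum] linear_diff[OF linear_entry_sum]
          linear_cmul[OF linear_entry_sum])
    ultimately show False
      using e unfolding extreme_point_of_def by blast
  qed
  then show "\<exists>c. w = c *\<^sub>R e"
    by (auto simp: w'_def)
qed

lemma CA_eq_convex_cone_hull:
  fixes A :: "real^'n^'m"
  assumes rat: "\<forall>i j. A $ i $ j \<in> \<rat>"
  shows "convex_cone hull (S_set A \<union> T_nonzero_cols A) = CA A"
proof
  show "convex_cone hull (S_set A \<union> T_nonzero_cols A) \<subseteq> CA A"
    using extreme_ray_generator convex_cone_CA
    by (intro hull_minimal) (auto simp: extreme_ray_CA_iff)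
  have "e \<in> convex_cone hull (S_set A \<union> T_nonzero_cols A)"
    if e: "e extreme_point_of {p \<in> CA A. entry_sum p = 1}" for e
  proof -
    have "e \<in> CA A" "e \<noteq> 0"
      using e by (auto simp: extreme_point_of_def entry_sum_def)
    then obtain t u where "t > 0" "u \<in> S_set A \<union> T_nonzero_cols A" "e = t *\<^sub>R u"
      using support_rigid_classification[OF rat _ _ support_rigid_if_extreme_point_of_base[OF e]]
      by metis
    then show ?thesis
      by (metis convex_cone_convex_cone_hull convex_cone_scaleR hull_inc less_imp_le)
  qed
  then have "convex_cone hull {e. e extreme_point_of {p \<in> CA A. entry_sum p = 1}}
      \<subseteq> convex_cone hull (S_set A \<union> T_nonzero_cols A)"
    by (intro hull_minimal convex_cone_convex_cone_hull) auto
  with convex_cone_subset_hull_extreme_points_of_base[OF convex_cone_CA linear_entry_sum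
      compact_CA_base entry_sum_pos[of _ A]]
  show "CA A \<subseteq> convex_cone hull (S_set A \<union> T_nonzero_cols A)"
    by blast
qed

theorem corollary2:
  fixes A :: "real^'n^'m"
  assumes rat: "\<forall>i j. A $ i $ j \<in> \<rat>"
  shows "pointed (CA A) \<and>
    (\<exists>T'. T' \<subseteq> T_set \<and> card T' \<le> CARD('n)
       \<and> convex_cone hull (S_set A \<union> T') = CA A
       \<and> {ray v | v. extreme_ray (CA A) v} = {ray v | v. v \<in> S_set A \<union> T'})"
proof (intro conjI exI[of _ "T_nonzero_cols A"])
  show "pointed (CA A)"
    by (rule pointed_CA)
  show "T_nonzero_cols A \<subseteq> T_set"
    by (auto simp: T_nonzero_cols_def T_set_def)
  show "card (T_nonzero_cols A) \<le> CARD('n)"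
    by (rule card_T_nonzero_cols_le)
  show "convex_cone hull (S_set A \<union> T_nonzero_cols A) = CA A"
    using rat by (rule CA_eq_convex_cone_hull)
  show "{ray v | v. extreme_ray (CA A) v} = {ray v | v. v \<in> S_set A \<union> T_nonzero_cols A}"
    using rat by (rule extreme_rays_CA)
qed

end
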